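(* Consider an instance of rooted $k$-robust Steiner tree on an undirected graph $G=(V,E)$ with edge costs $c$, root $r$ and terminal set $U\subseteq V$, a threshold $T\ge0$, and a constant $\beta>2$. Let $S$ be constructed by starting with $S=\{r\}$ and, while some terminal $v\in U$ has $d(v,S)>\beta\frac{T}{k}$, adding such a $v$ to $S$; let $\Phi_T$ be a minimum spanning tree on $S$ (with respect to shortest-path distances, realized by the corresponding shortest paths). Let $\Phi^*$ and $T^*$ denote the first-stage cost and second-stage cost of an optimal solution of the $k$-robust instance. If $T\ge T^*$ then $c(\Phi_T)\le\frac{2\beta}{\beta-2}\cdot\Phi^*+2\cdot T^*$.
   Context: $d$ is the shortest-path distance in $G$ and $d(v,S)=\min_{w\in S}d(v,w)$. Rooted $k$-robust Steiner tree: inflation $\lambda\ge1$, integer $k\ge1$; a feasible solution is a first-stage edge set $E_0$ and, for each $D\subseteq U$ with $|D|=k$, an edge set $E_D$ such that $E_0\cup E_D$ connects every terminal of $D$ to $r$; its cost is $c(E_0)+\lambda\max_Dc(E_D)$, with first-stage cost $c(E_0)$ and second-stage cost $\max_Dc(E_D)$. *)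

theory Defs
  imports Complex_Main
begin

definition graph :: "'a set \<Rightarrow> 'a set set \<Rightarrow> bool" where
  "graph V E \<longleftrightarrow> finite V \<and> (\<forall>e\<in>E. e \<subseteq> V \<and> card e = 2)"

definition adj :: "'a set set \<Rightarrow> ('a \<times> 'a) set" where
  "adj F = {(x, y). {x, y} \<in> F}"

definition walk :: "'a set set \<Rightarrow> 'a list \<Rightarrow> bool" where
  "walk F xs \<longleftrightarrow> xs \<noteq> [] \<and> (\<forall>(x, y)\<in>set (zip xs (tl xs)). {x, y} \<in> F)"

definition walk_cost :: "('a set \<Rightarrow> real) \<Rightarrow> 'a list \<Rightarrow> real" where
  "walk_cost c xs = sum_list (map (\<lambda>(x, y). c {x, y}) (zip xs (tl xs)))"

definition spdist :: "'a set set \<Rightarrow> ('a set \<Rightarrow> real) \<Rightarrow> 'a \<Rightarrow> 'a \<Rightarrow> real" where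
  "spdist E c u v = Inf {walk_cost c xs | xs. walk E xs \<and> hd xs = u \<and> last xs = v}"

definition spdist_set :: "'a set set \<Rightarrow> ('a set \<Rightarrow> real) \<Rightarrow> 'a \<Rightarrow> 'a set \<Rightarrow> real" where
  "spdist_set E c v S = Min ((\<lambda>w. spdist E c v w) ` S)"

definition scenarios :: "'a set \<Rightarrow> nat \<Rightarrow> 'a set set" where
  "scenarios U k = {D. D \<subseteq> U \<and> card D = k}"

definition robust_feasible ::
  "'a set set \<Rightarrow> 'a \<Rightarrow> 'a set \<Rightarrow> nat \<Rightarrow> 'a set set \<Rightarrow> ('a set \<Rightarrow> 'a set set) \<Rightarrow> bool" where
  "robust_feasible E r U k E0 ED \<longleftrightarrow> E0 \<subseteq> E \<and>
     (\<forall>D\<in>scenarios U k. ED D \<subseteq> E \<and> (\<forall>v\<in>D. (v, r) \<in> (adj (E0 \<union> ED D))\<^sup>*))"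

definition first_stage_cost :: "('a set \<Rightarrow> real) \<Rightarrow> 'a set set \<Rightarrow> real" where
  "first_stage_cost c E0 = (\<Sum>e\<in>E0. c e)"

definition second_stage_cost ::
  "('a set \<Rightarrow> real) \<Rightarrow> 'a set \<Rightarrow> nat \<Rightarrow> ('a set \<Rightarrow> 'a set set) \<Rightarrow> real" where
  "second_stage_cost c U k ED = Max ((\<lambda>D. \<Sum>e\<in>ED D. c e) ` scenarios U k)"

definition robust_cost ::
  "('a set \<Rightarrow> real) \<Rightarrow> 'a set \<Rightarrow> nat \<Rightarrow> real \<Rightarrow> 'a set set \<Rightarrow> ('a set \<Rightarrow> 'a set set) \<Rightarrow> real" where
  "robust_cost c U k lam E0 ED = first_stage_cost c E0 + lam * second_stage_cost c U k ED"

definition robust_optimal ::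
  "'a set set \<Rightarrow> ('a set \<Rightarrow> real) \<Rightarrow> 'a \<Rightarrow> 'a set \<Rightarrow> nat \<Rightarrow> real
    \<Rightarrow> 'a set set \<Rightarrow> ('a set \<Rightarrow> 'a set set) \<Rightarrow> bool" where
  "robust_optimal E c r U k lam E0 ED \<longleftrightarrow> robust_feasible E r U k E0 ED \<and>
     (\<forall>E0' ED'. robust_feasible E r U k E0' ED' \<longrightarrow>
        robust_cost c U k lam E0 ED \<le> robust_cost c U k lam E0' ED')"

text \<open>ss lists the vertices of S in the order they were added: starting with r,
  each added vertex is a terminal at distance > beta*T/k from the previously chosen
  ones, and the process stops when every terminal is within beta*T/k of S.\<close>
definition greedy_net_run ::
  "'a set set \<Rightarrow> ('a set \<Rightarrow> real) \<Rightarrow> 'a \<Rightarrow> 'a set \<Rightarrow> real \<Rightarrow> 'a list \<Rightarrow> bool" where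
  "greedy_net_run E c r U \<delta> ss \<longleftrightarrow> ss \<noteq> [] \<and> hd ss = r \<and>
     (\<forall>i\<in>{1..<length ss}. ss ! i \<in> U \<and> spdist_set E c (ss ! i) (set (take i ss)) > \<delta>) \<and>
     (\<forall>v\<in>U. \<not> (spdist_set E c v (set ss) > \<delta>))"

text \<open>Spanning trees on S in the metric closure (edges as ordered pairs, one per
  undirected edge): connected on S with |S|-1 edges.\<close>
definition spanning_tree_on :: "'a set \<Rightarrow> ('a \<times> 'a) set \<Rightarrow> bool" where
  "spanning_tree_on S F \<longleftrightarrow> F \<subseteq> S \<times> S \<and> (\<forall>(u, v)\<in>F. u \<noteq> v) \<and>
     (\<forall>u\<in>S. \<forall>v\<in>S. (u, v) \<in> (F \<union> F\<inverse>)\<^sup>*) \<and> card F = card S - 1"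

definition tree_cost :: "('a \<Rightarrow> 'a \<Rightarrow> real) \<Rightarrow> ('a \<times> 'a) set \<Rightarrow> real" where
  "tree_cost w F = (\<Sum>(u, v)\<in>F. w u v)"

definition is_mst :: "('a \<Rightarrow> 'a \<Rightarrow> real) \<Rightarrow> 'a set \<Rightarrow> ('a \<times> 'a) set \<Rightarrow> bool" where
  "is_mst w S F \<longleftrightarrow> spanning_tree_on S F \<and>
     (\<forall>F'. spanning_tree_on S F' \<longrightarrow> tree_cost w F \<le> tree_cost w F')"

end

theory Submission
  imports Defs "HOL-Library.Sublist"
begin

text \<open>
  Write \<open>\<Phi>\<^sup>*\<close> and \<open>T\<^sup>*\<close> for the first- and second-stage cost of the optimum and let
  \<open>g = \<lfloor>(|S| - 1) / k\<rfloor>\<close>. The first-stage edges together with the second-stage edges of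
  \<open>m\<close> scenarios connect all terminals of these scenarios to \<open>r\<close> and cost at most
  \<open>\<Phi>\<^sup>* + m T\<^sup>*\<close>; doubling this edge set into a closed walk and shortcutting it yields a
  spanning tree on \<open>r\<close> and any of these terminals, in the shortest-path metric, of cost at
  most \<open>2 (\<Phi>\<^sup>* + m T\<^sup>*)\<close>. Covering \<open>g k\<close> points of \<open>S - {r}\<close> by \<open>g\<close> scenarios, and using
  that the points of \<open>S\<close> are pairwise more than \<open>\<beta> T / k\<close> apart, gives
  \<open>g \<beta> T \<le> 2 \<Phi>\<^sup>* + 2 g T\<close>, i.e. \<open>g T\<^sup>* (\<beta> - 2) \<le> 2 \<Phi>\<^sup>*\<close>. Covering all of \<open>S - {r}\<close> takes
  \<open>g + 1\<close> scenarios, so \<open>c(\<Phi>\<^sub>T) \<le> 2 \<Phi>\<^sup>* + 2 (g + 1) T\<^sup>* \<le> 2 \<beta> / (\<beta> - 2) \<Phi>\<^sup>* + 2 T\<^sup>*\<close>.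
\<close>

section \<open>Walks and shortest-path distances\<close>

lemma walk_Nil [simp]: "\<not> walk F []"
  by (simp add: walk_def)

lemma walk_single [simp]: "walk F [x]"
  by (simp add: walk_def)

lemma walk_Cons_Cons [simp]: "walk F (x # y # zs) \<longleftrightarrow> {x, y} \<in> F \<and> walk F (y # zs)"
  by (simp add: walk_def)

lemma walk_cost_single [simp]: "walk_cost c [x] = 0"
  by (simp add: walk_cost_def)

lemma walk_cost_Cons_Cons [simp]: "walk_cost c (x # y # zs) = c {x, y} + walk_cost c (y # zs)"
  by (simp add: walk_cost_def)

lemma walk_mono: "walk F xs \<Longrightarrow> F \<subseteq> G \<Longrightarrow> walk G xs"
  unfolding walk_def by auto

lemma walk_cost_nonneg: "walk F xs \<Longrightarrow> \<forall>e\<in>F. 0 \<le> c e \<Longrightarrow> 0 \<le> walk_cost c xs"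
  by (induction xs rule: induct_list012) auto

text \<open>Not simp rules: for \<open>ys = []\<close> the right-hand side contains the left-hand side.\<close>

lemma walk_append_Cons_iff: "walk F (xs @ y # ys) \<longleftrightarrow> walk F (xs @ [y]) \<and> walk F (y # ys)"
  by (induction xs rule: induct_list012) auto

lemma walk_cost_append_Cons: "walk_cost c (xs @ y # ys) = walk_cost c (xs @ [y]) + walk_cost c (y # ys)"
  by (induction xs rule: induct_list012) auto

lemma walk_Cons_nonempty:
  "ys \<noteq> [] \<Longrightarrow> walk F (x # ys) \<longleftrightarrow> {x, hd ys} \<in> F \<and> walk F ys"
  by (cases ys) auto

lemma walk_snoc_nonempty:
  "xs \<noteq> [] \<Longrightarrow> walk F (xs @ [y]) \<longleftrightarrow> walk F xs \<and> {last xs, y} \<in> F"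
  using walk_append_Cons_iff[of F "butlast xs" "last xs" "[y]"]
  by (cases xs rule: rev_exhaust) auto

lemma walk_cost_Cons_nonempty:
  "ys \<noteq> [] \<Longrightarrow> walk_cost c (x # ys) = c {x, hd ys} + walk_cost c ys"
  by (cases ys) auto

lemma walk_cost_snoc_nonempty:
  "xs \<noteq> [] \<Longrightarrow> walk_cost c (xs @ [y]) = walk_cost c xs + c {last xs, y}"
  using walk_cost_append_Cons[of c "butlast xs" "last xs" "[y]"]
  by (cases xs rule: rev_exhaust) auto

lemma walk_rev [simp]: "walk F (rev xs) \<longleftrightarrow> walk F xs"
proof (induction xs rule: induct_list012)
  case (3 x y zs)
  then show ?case
    using walk_append_Cons_iff[of F "rev zs" y "[x]"] by (auto simp: insert_commute)
qed auto

lemma walk_cost_rev [simp]: "walk_cost c (rev xs) = walk_cost c xs"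
proof (induction xs rule: induct_list012)
  case (3 x y zs)
  then show ?case
    using walk_cost_append_Cons[of c "rev zs" y "[x]"] by (simp add: insert_commute)
qed auto

lemma spdist_sym: "spdist E c u v = spdist E c v u"
proof -
  have "walk_cost c xs \<in> {walk_cost c xs |xs. walk E xs \<and> hd xs = v \<and> last xs = u}"
    if "walk E xs" "hd xs = u" "last xs = v" for xs u v
    using that by (intro CollectI exI[of _ "rev xs"]) (simp add: hd_rev last_rev)
  then have "{walk_cost c xs |xs. walk E xs \<and> hd xs = u \<and> last xs = v}
      \<subseteq> {walk_cost c xs |xs. walk E xs \<and> hd xs = v \<and> last xs = u}" for u v
    by blast
  then show ?thesis
    unfolding spdist_def by (metis (no_types, lifting) subset_antisym)
qed

lemma spdist_le_walk_cost:
  assumes "\<forall>e\<in>E. 0 \<le> c e" "walk E xs"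
  shows "spdist E c (hd xs) (last xs) \<le> walk_cost c xs"
  unfolding spdist_def
  using assms walk_cost_nonneg by (intro cInf_lower bdd_belowI[of _ 0]) blast+

definition closed_walk :: "'a set set \<Rightarrow> 'a \<Rightarrow> 'a list \<Rightarrow> bool" where
  "closed_walk F u ws \<longleftrightarrow> walk F ws \<and> hd ws = u \<and> last ws = u"

lemma closed_walk_mono: "closed_walk F u ws \<Longrightarrow> F \<subseteq> G \<Longrightarrow> closed_walk G u ws"
  unfolding closed_walk_def using walk_mono by blast

lemma closed_walk_detour:
  assumes "closed_walk F u wu" "closed_walk F v wv" "{u, v} \<in> F"
  shows "closed_walk F u (wu @ wv @ [u])"
    and "walk_cost c (wu @ wv @ [u]) = walk_cost c wu + walk_cost c wv + 2 * c {u, v}"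
proof -
  obtain wu' where wu: "wu = wu' @ [u]"
    using assms(1) unfolding closed_walk_def by (metis append_butlast_last_id walk_Nil)
  have wv: "wv \<noteq> []" "hd wv = v" "last wv = v" "walk F wv"
    using assms(2) unfolding closed_walk_def by auto
  have ws: "wu @ wv @ [u] = wu' @ u # (wv @ [u])"
    by (simp add: wu)
  have "walk F (wu' @ [u])" "hd (wu' @ [u]) = u"
    using assms(1) unfolding closed_walk_def wu by simp_all
  then show "closed_walk F u (wu @ wv @ [u])"
    using assms(3) wv unfolding closed_walk_def ws walk_append_Cons_iff[of F wu' u "wv @ [u]"]
    by (auto simp: walk_Cons_nonempty walk_snoc_nonempty insert_commute hd_append)
  have "walk_cost c (u # wv @ [u]) = c {u, v} + walk_cost c wv + c {v, u}"
    using wv by (simp add: walk_cost_Cons_nonempty walk_cost_snoc_nonempty)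
  then show "walk_cost c (wu @ wv @ [u]) = walk_cost c wu + walk_cost c wv + 2 * c {u, v}"
    unfolding ws walk_cost_append_Cons[of c wu' u "wv @ [u]"] wu[symmetric]
    by (simp add: insert_commute)
qed

section \<open>Components and covering tours\<close>

definition reach :: "'a set set \<Rightarrow> 'a \<Rightarrow> 'a set" where
  "reach H u = {x. (u, x) \<in> (adj H)\<^sup>*}"

lemma reach_self [simp]: "u \<in> reach H u"
  by (simp add: reach_def)

lemma reach_trans: "v \<in> reach H u \<Longrightarrow> w \<in> reach H v \<Longrightarrow> w \<in> reach H u"
  unfolding reach_def by (meson mem_Collect_eq rtrancl_trans)

lemma reach_sym:
  assumes "v \<in> reach H u"
  shows "u \<in> reach H v"
proof -
  have "sym (adj H)"
    by (auto simp: sym_def adj_def insert_commute)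
  then have "sym ((adj H)\<^sup>*)"
    by (rule sym_rtrancl)
  then show ?thesis
    using symD[of "(adj H)\<^sup>*" u v] assms unfolding reach_def by simp
qed

lemma reach_mono:
  assumes "H \<subseteq> H'"
  shows "reach H u \<subseteq> reach H' u"
proof -
  have "adj H \<subseteq> adj H'"
    using assms by (auto simp: adj_def)
  then have "(adj H)\<^sup>* \<subseteq> (adj H')\<^sup>*"
    by (rule rtrancl_mono)
  then show ?thesis
    unfolding reach_def by blast
qed

lemma reach_isolated:
  assumes "\<forall>v. {u, v} \<notin> H"
  shows "reach H u = {u}"
proof -
  have "x = u" if "(u, x) \<in> (adj H)\<^sup>*" for x
    using that
  proof (cases rule: converse_rtranclE)
    case (step y)
    then show ?thesis
      using assms by (simp add: adj_def)
  qed simp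
  then show ?thesis
    unfolding reach_def by blast
qed

lemma reach_insert_edge: "reach (insert {u, v} H) u \<subseteq> reach H u \<union> reach H v"
proof
  fix x assume "x \<in> reach (insert {u, v} H) u"
  then have "(u, x) \<in> (adj (insert {u, v} H))\<^sup>*"
    by (simp add: reach_def)
  then show "x \<in> reach H u \<union> reach H v"
  proof (induction rule: rtrancl_induct)
    case (step y z)
    show ?case
    proof (cases "{y, z} \<in> H")
      case True
      then have "z \<in> reach H y"
        by (auto simp: reach_def adj_def)
      then show ?thesis
        using step.IH reach_trans[of y H _ z] by blast
    next
      case False
      then have "z \<in> {u, v}"
        using step.hyps(2) by (auto simp: adj_def doubleton_eq_iff)
      then show ?thesis
        by auto
    qed
  qed simp
qed

definition component_edges :: "'a set set \<Rightarrow> 'a \<Rightarrow> 'a set set" where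
  "component_edges H u = {f \<in> H. f \<noteq> {} \<and> f \<subseteq> reach H u}"

lemma component_edges_subset: "component_edges H u \<subseteq> H"
  by (auto simp: component_edges_def)

lemma reach_component_edges: "reach H u \<subseteq> reach (component_edges H u) u"
proof
  fix x assume "x \<in> reach H u"
  then have "(u, x) \<in> (adj H)\<^sup>*"
    by (simp add: reach_def)
  then show "x \<in> reach (component_edges H u) u"
  proof (induction rule: rtrancl_induct)
    case (step y z)
    then have "{y, z} \<subseteq> reach H u"
      by (auto simp: reach_def adj_def intro: rtrancl_into_rtrancl)
    with step have "(y, z) \<in> adj (component_edges H u)"
      by (simp add: adj_def component_edges_def)
    with step.IH show ?case
      unfolding reach_def by (auto intro: rtrancl_into_rtrancl)
  qed simp
qed

lemma sum_component_edges_le: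
  fixes c :: "'a set \<Rightarrow> real"
  assumes "finite H" "\<forall>e\<in>H. 0 \<le> c e" "v \<notin> reach H u"
  shows "sum c (component_edges H u) + sum c (component_edges H v) \<le> sum c H"
proof -
  have "component_edges H u \<inter> component_edges H v = {}"
  proof (rule ccontr)
    assume "component_edges H u \<inter> component_edges H v \<noteq> {}"
    then obtain x where "x \<in> reach H u" "x \<in> reach H v"
      unfolding component_edges_def by blast
    then have "v \<in> reach H u"
      by (meson reach_sym reach_trans)
    with assms(3) show False ..
  qed
  then have "sum c (component_edges H u) + sum c (component_edges H v)
      = sum c (component_edges H u \<union> component_edges H v)"
    using assms(1) component_edges_subset by (metis finite_subset sum.union_disjoint)
  also have "\<dots> \<le> sum c H"
    by (rule sum_mono2) (use assms(1,2) in \<open>auto simp: component_edges_def\<close>)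
  finally show ?thesis .
qed

definition covering_tour :: "'a set set \<Rightarrow> ('a set \<Rightarrow> real) \<Rightarrow> 'a \<Rightarrow> 'a list \<Rightarrow> bool" where
  "covering_tour H c u ws \<longleftrightarrow>
     closed_walk H u ws \<and> reach H u \<subseteq> set ws \<and> walk_cost c ws \<le> 2 * sum c H"

lemma covering_tour_insert_inner_edge:
  assumes "covering_tour H c u ws" "v \<in> reach H u"
    and "finite H" "{u, v} \<notin> H" "0 \<le> c {u, v}"
  shows "covering_tour (insert {u, v} H) c u ws"
proof -
  have "reach (insert {u, v} H) u \<subseteq> reach H u"
    using reach_insert_edge[of u v H] reach_trans[OF assms(2)] by blast
  then show ?thesis
    using assms closed_walk_mono[of H u ws "insert {u, v} H"]
    unfolding covering_tour_def by auto
qed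

text \<open>A bridge \<open>{u, v}\<close> is traversed twice: once out to the tour of \<open>v\<close>'s side, once back.\<close>
lemma covering_tour_insert_bridge:
  assumes "covering_tour (component_edges H u) c u wu" "covering_tour (component_edges H v) c v wv"
    and "v \<notin> reach H u" "finite H" "\<forall>e\<in>insert {u, v} H. 0 \<le> c e" "{u, v} \<notin> H"
  shows "covering_tour (insert {u, v} H) c u (wu @ wv @ [u])"
proof -
  let ?H = "insert {u, v} H"
  have "closed_walk ?H u wu" "closed_walk ?H v wv"
    using assms(1,2) component_edges_subset
    unfolding covering_tour_def by (meson closed_walk_mono subset_insertI2)+
  note tour = closed_walk_detour[OF this insertI1]
  have "reach H u \<subseteq> set wu" "reach H v \<subseteq> set wv"
    using reach_component_edges[of H u] reach_component_edges[of H v] assms(1,2)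
    unfolding covering_tour_def by blast+
  then have "reach ?H u \<subseteq> set (wu @ wv @ [u])"
    using reach_insert_edge[of u v H] by auto
  moreover have "sum c ?H = c {u, v} + sum c H"
    using assms(4,6) by simp
  then have "walk_cost c (wu @ wv @ [u]) \<le> 2 * sum c ?H"
    using tour(2)[of c] assms(1,2,5) sum_component_edges_le[OF assms(4) _ assms(3), of c]
    unfolding covering_tour_def by auto
  ultimately show ?thesis
    using tour(1) unfolding covering_tour_def by blast
qed

lemma covering_tour_exists:
  assumes "finite H" "\<forall>e\<in>H. 0 \<le> c e"
  shows "\<exists>ws. covering_tour H c u ws"
  using assms
proof (induction "card H" arbitrary: H u rule: less_induct)
  case less
  show ?case
  proof (cases "\<exists>v. {u, v} \<in> H")
    case False
    then show ?thesis
      using reach_isolated[of u H] sum_nonneg[of H c] less.prems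
      by (intro exI[of _ "[u]"]) (auto simp: covering_tour_def closed_walk_def)
  next
    case True
    then obtain v where "{u, v} \<in> H"
      by blast
    define H' where "H' = H - {{u, v}}"
    have H: "H = insert {u, v} H'" "{u, v} \<notin> H'" "finite H'"
      using \<open>{u, v} \<in> H\<close> less.prems(1) by (auto simp: H'_def)
    have IH: "\<exists>ws. covering_tour G c x ws" if "G \<subseteq> H'" for G x
    proof (rule less.hyps)
      have "card H' < card H"
        unfolding H'_def using less.prems(1) \<open>{u, v} \<in> H\<close> by (rule card_Diff1_less)
      then show "card G < card H"
        using card_mono[OF \<open>finite H'\<close> that] by simp
      show "finite G" "\<forall>e\<in>G. 0 \<le> c e"
        using that H less.prems finite_subset by auto
    qed
    show ?thesis
    proof (cases "v \<in> reach H' u")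
      case True
      then show ?thesis
        using IH[of H' u] covering_tour_insert_inner_edge H less.prems(2) by fastforce
    next
      case False
      then show ?thesis
        using IH[OF component_edges_subset, of u u] IH[OF component_edges_subset, of v v]
          covering_tour_insert_bridge[OF _ _ False] H less.prems(2) by metis
    qed
  qed
qed

section \<open>Spanning trees in the shortest-path metric\<close>

definition metric_length :: "'a set set \<Rightarrow> ('a set \<Rightarrow> real) \<Rightarrow> 'a list \<Rightarrow> real" where
  "metric_length E c xs = sum_list (map (\<lambda>(x, y). spdist E c x y) (zip xs (tl xs)))"

lemma metric_length_Nil [simp]: "metric_length E c [] = 0"
  by (simp add: metric_length_def)

lemma metric_length_single [simp]: "metric_length E c [x] = 0"
  by (simp add: metric_length_def)

lemma metric_length_Cons_Cons [simp]:
  "metric_length E c (x # y # zs) = spdist E c x y + metric_length E c (y # zs)"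
  by (simp add: metric_length_def)

lemma metric_length_subseq_le:
  assumes "\<forall>e\<in>E. 0 \<le> c e"
  shows "walk E ws \<Longrightarrow> subseq xs ws \<Longrightarrow> metric_length E c xs \<le> walk_cost c ws"
proof (induction xs arbitrary: ws rule: induct_list012)
  case 1
  then show ?case
    using walk_cost_nonneg assms by simp
next
  case (2 x)
  then show ?case
    using walk_cost_nonneg assms by simp
next
  case (3 x y zs)
  obtain us vs where ws: "ws = us @ x # vs" and "subseq (y # zs) vs"
    using list_emb_ConsD[OF "3.prems"(2)] by blast
  obtain ps qs where vs: "vs = ps @ y # qs" and "subseq zs qs"
    using list_emb_ConsD[OF \<open>subseq (y # zs) vs\<close>] by blast
  have walks: "walk E (us @ [x])" "walk E (x # ps @ [y])" "walk E (y # qs)"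
    using "3.prems"(1) walk_append_Cons_iff[of E us x vs] walk_append_Cons_iff[of E "x # ps" y qs]
    unfolding ws vs by simp_all
  have "spdist E c x y \<le> walk_cost c (x # ps @ [y])"
    using spdist_le_walk_cost[OF assms walks(2)] by simp
  moreover have "metric_length E c (y # zs) \<le> walk_cost c (y # qs)"
    using "3.IH" walks(3) \<open>subseq zs qs\<close> by simp
  moreover have "0 \<le> walk_cost c (us @ [x])"
    using walk_cost_nonneg[OF walks(1) assms] .
  moreover have "walk_cost c ws
      = walk_cost c (us @ [x]) + walk_cost c (x # ps @ [y]) + walk_cost c (y # qs)"
    using walk_cost_append_Cons[of c "x # ps" y qs]
    unfolding ws vs walk_cost_append_Cons[of c us x "ps @ y # qs"] by simp
  ultimately show ?case
    by simp
qed

lemma rtrancl_path_from_hd: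
  "u \<in> set xs \<Longrightarrow> (hd xs, u) \<in> (set (zip xs (tl xs)))\<^sup>*"
proof (induction xs)
  case (Cons x xs)
  show ?case
  proof (cases "u = x")
    case False
    then have "xs \<noteq> []" "(hd xs, u) \<in> (set (zip xs (tl xs)))\<^sup>*"
      using Cons by auto
    moreover have "set (zip xs (tl xs)) \<subseteq> set (zip (x # xs) xs)"
      using \<open>xs \<noteq> []\<close> by (cases xs) auto
    moreover have "(x, hd xs) \<in> set (zip (x # xs) xs)"
      using \<open>xs \<noteq> []\<close> by (cases xs) auto
    ultimately show ?thesis
      by (auto intro: converse_rtrancl_into_rtrancl dest: rtrancl_mono[THEN subsetD, rotated])
  qed simp
qed simp

lemma spanning_tree_on_path:
  assumes "distinct xs" "xs \<noteq> []"
  shows "spanning_tree_on (set xs) (set (zip xs (tl xs)))"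
proof -
  let ?F = "set (zip xs (tl xs))"
  have "?F \<subseteq> set xs \<times> set xs"
    by (auto dest: set_zip_leftD set_zip_rightD simp: list.set_sel(2) assms(2))
  moreover have "\<forall>(u, v)\<in>?F. u \<noteq> v"
    using assms(1) by (auto simp: set_zip nth_tl nth_eq_iff_index_eq)
  moreover have "(u, v) \<in> (?F \<union> ?F\<inverse>)\<^sup>*" if "u \<in> set xs" "v \<in> set xs" for u v
  proof -
    have "(u, hd xs) \<in> (?F \<union> ?F\<inverse>)\<^sup>*"
      using rtrancl_path_from_hd[OF that(1)]
      by (metis rtrancl_converseI inf_sup_aci(5) Un_upper1 rtrancl_mono subsetD)
    moreover have "(hd xs, v) \<in> (?F \<union> ?F\<inverse>)\<^sup>*"
      using rtrancl_path_from_hd[OF that(2)] rtrancl_mono[of ?F "?F \<union> ?F\<inverse>"] by blast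
    ultimately show ?thesis
      by (rule rtrancl_trans)
  qed
  moreover have "card ?F = card (set xs) - 1"
    using assms(1) by (simp add: distinct_card distinct_zipI1)
  ultimately show ?thesis
    unfolding spanning_tree_on_def by blast
qed

lemma tree_cost_path:
  assumes "distinct xs"
  shows "tree_cost (spdist E c) (set (zip xs (tl xs))) = metric_length E c xs"
  unfolding tree_cost_def metric_length_def
  by (rule sum_list_distinct_conv_sum_set[symmetric]) (rule distinct_zipI1[OF assms])

lemma subseq_remdups: "subseq (remdups xs) xs"
  by (induction xs) (auto intro: subseq_Cons2)

text \<open>Double the edges of \<open>H\<close> into a closed walk through all of \<open>S\<close>, then shortcut it to a
  path on \<open>S\<close>.\<close>
lemma spanning_tree_cost_le_twice:
  assumes "finite H" "H \<subseteq> E" "\<forall>e\<in>E. 0 \<le> c e"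
    and "r \<in> S" "S \<subseteq> reach H r"
  shows "\<exists>F. spanning_tree_on S F \<and> tree_cost (spdist E c) F \<le> 2 * sum c H"
proof -
  obtain ws where ws: "closed_walk H r ws" "reach H r \<subseteq> set ws" "walk_cost c ws \<le> 2 * sum c H"
    using covering_tour_exists[OF assms(1), of c r] assms(2,3) unfolding covering_tour_def by blast
  then have "walk H ws" "hd ws = r"
    unfolding closed_walk_def by auto
  then have "walk E ws" "ws = r # tl ws"
    using walk_mono[OF _ assms(2)] by (auto, metis list.collapse walk_Nil)
  define xs where "xs = r # remdups (filter (\<lambda>x. x \<in> S \<and> x \<noteq> r) (tl ws))"
  have "subseq (remdups (filter (\<lambda>x. x \<in> S \<and> x \<noteq> r) (tl ws))) (tl ws)"
    using subseq_remdups subseq_filter_left subseq_order.trans by blast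
  then have "subseq xs (r # tl ws)"
    unfolding xs_def by (rule subseq_Cons2)
  then have "subseq xs ws"
    using \<open>ws = r # tl ws\<close> by metis
  then have "metric_length E c xs \<le> 2 * sum c H"
    using metric_length_subseq_le[OF assms(3) \<open>walk E ws\<close>] ws(3) by fastforce
  moreover have "distinct xs"
    by (simp add: xs_def)
  moreover have "set ws = insert r (set (tl ws))"
    using \<open>ws = r # tl ws\<close> by (metis list.simps(15))
  then have "set xs = S"
    unfolding xs_def using assms(4,5) ws(2) by auto
  ultimately show ?thesis
    using spanning_tree_on_path tree_cost_path by (metis list.distinct(1) xs_def)
qed

lemma tree_cost_ge_separated:
  assumes "spanning_tree_on S F" "\<forall>u\<in>S. \<forall>v\<in>S. u \<noteq> v \<longrightarrow> \<delta> < w u v"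
  shows "real (card S - 1) * \<delta> \<le> tree_cost w F"
proof -
  have "\<delta> \<le> w u v" if "(u, v) \<in> F" for u v
    using assms that unfolding spanning_tree_on_def by fastforce
  then have "real (card F) * \<delta> \<le> tree_cost w F"
    unfolding tree_cost_def by (intro sum_bounded_below) auto
  then show ?thesis
    using assms(1) by (simp add: spanning_tree_on_def)
qed

section \<open>Scenarios and robust solutions\<close>

lemma sum_Un_le:
  fixes f :: "'a \<Rightarrow> 'b::ordered_ab_group_add"
  assumes "finite A" "finite B" "\<forall>x\<in>A \<inter> B. 0 \<le> f x"
  shows "sum f (A \<union> B) \<le> sum f A + sum f B"
  using sum_Un[OF assms(1,2), of f] sum_nonneg[of "A \<inter> B" f] assms(3) by simp

lemma finite_scenarios: "finite U \<Longrightarrow> finite (scenarios U k)"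
  unfolding scenarios_def by (rule finite_subset[of _ "Pow U"]) auto

lemma scenario_extend:
  assumes "finite U" "R \<subseteq> U" "card R \<le> k" "k \<le> card U"
  shows "\<exists>D\<in>scenarios U k. R \<subseteq> D"
proof -
  have "finite R"
    using assms(1,2) finite_subset by blast
  have "k - card R \<le> card (U - R)"
    using assms by (simp add: card_Diff_subset \<open>finite R\<close>)
  then obtain B where B: "B \<subseteq> U - R" "card B = k - card R"
    by (meson obtain_subset_with_card_n)
  then have "finite B"
    using assms(1) finite_subset by blast
  then have "card (R \<union> B) = k"
    using B assms(3) \<open>finite R\<close> by (subst card_Un_disjoint) auto
  then show ?thesis
    using B assms(2) by (intro bexI[of _ "R \<union> B"]) (auto simp: scenarios_def)
qed

lemma scenarios_cover_exact:
  assumes "finite X" "X \<subseteq> U" "card X = g * k"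
  shows "\<exists>Ds\<subseteq>scenarios U k. finite Ds \<and> card Ds \<le> g \<and> X \<subseteq> \<Union>Ds"
  using assms
proof (induction g arbitrary: X)
  case 0
  then show ?case
    by (intro exI[of _ "{}"]) auto
next
  case (Suc g)
  obtain D where D: "D \<subseteq> X" "card D = k"
    using obtain_subset_with_card_n[of k X] Suc.prems(3) by auto
  have "card (X - D) = g * k"
    using D Suc.prems(1,3) by (simp add: card_Diff_subset finite_subset)
  then obtain Ds where Ds: "Ds \<subseteq> scenarios U k" "finite Ds" "card Ds \<le> g" "X - D \<subseteq> \<Union>Ds"
    using Suc.IH[of "X - D"] Suc.prems(1,2) by blast
  have "D \<in> scenarios U k"
    using D Suc.prems(2) by (auto simp: scenarios_def)
  with Ds show ?case
    by (intro exI[of _ "insert D Ds"]) (auto simp: card_insert_if)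
qed

lemma scenarios_cover:
  assumes "finite U" "X \<subseteq> U" "0 < k" "k \<le> card U"
  shows "\<exists>Ds\<subseteq>scenarios U k. finite Ds \<and> card Ds \<le> card X div k + 1 \<and> X \<subseteq> \<Union>Ds"
proof -
  have "finite X"
    using assms(1,2) finite_subset by blast
  obtain Y where Y: "Y \<subseteq> X" "card Y = card X div k * k"
    using obtain_subset_with_card_n[of "card X div k * k" X] by auto
  have "finite Y" "Y \<subseteq> U"
    using Y(1) \<open>finite X\<close> assms(2) finite_subset by auto
  obtain Ds where Ds: "Ds \<subseteq> scenarios U k" "finite Ds" "card Ds \<le> card X div k" "Y \<subseteq> \<Union>Ds"
    using scenarios_cover_exact[OF \<open>finite Y\<close> \<open>Y \<subseteq> U\<close> Y(2)] by blast
  have "card (X - Y) = card X mod k"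
    using Y \<open>finite X\<close> by (simp add: card_Diff_subset finite_subset minus_div_mult_eq_mod)
  then obtain D where D: "D \<in> scenarios U k" "X - Y \<subseteq> D"
    using scenario_extend[of U "X - Y" k] assms by fastforce
  with Ds show ?thesis
    by (intro exI[of _ "insert D Ds"]) (auto simp: card_insert_if)
qed

lemma second_stage_cost_ge:
  assumes "finite U" "D \<in> scenarios U k"
  shows "sum c (ED D) \<le> second_stage_cost c U k ED"
  unfolding second_stage_cost_def using assms finite_scenarios by (intro Max_ge) auto

lemma second_stage_cost_nonneg:
  assumes "robust_feasible E r U k E0 ED" "\<forall>e\<in>E. 0 \<le> c e" "finite U" "k \<le> card U"
  shows "0 \<le> second_stage_cost c U k ED"
proof -
  obtain D where "D \<in> scenarios U k"
    using scenario_extend[of U "{}" k] assms(3,4) by auto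
  moreover have "ED D \<subseteq> E"
    using assms(1) \<open>D \<in> scenarios U k\<close> by (simp add: robust_feasible_def)
  ultimately show ?thesis
    using second_stage_cost_ge[OF assms(3)] sum_nonneg[of "ED D" c] assms(2)
    by (meson order_trans subsetD)
qed

lemma robust_feasible_reach:
  assumes "robust_feasible E r U k E0 ED" "Ds \<subseteq> scenarios U k"
  shows "insert r (\<Union>Ds) \<subseteq> reach (E0 \<union> \<Union>(ED ` Ds)) r"
proof (intro subsetI)
  fix v assume "v \<in> insert r (\<Union>Ds)"
  then consider "v = r" | D where "D \<in> Ds" "v \<in> D"
    by blast
  then show "v \<in> reach (E0 \<union> \<Union>(ED ` Ds)) r"
  proof cases
    case 2
    then have "r \<in> reach (E0 \<union> ED D) v"
      using assms unfolding robust_feasible_def reach_def by blast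
    then have "r \<in> reach (E0 \<union> \<Union>(ED ` Ds)) v"
      using reach_mono[of "E0 \<union> ED D" "E0 \<union> \<Union>(ED ` Ds)" v] \<open>D \<in> Ds\<close> by blast
    then show ?thesis
      by (rule reach_sym)
  qed simp
qed

lemma sum_scenario_edges_le:
  assumes "finite E" "\<forall>e\<in>E. 0 \<le> c e" "finite U"
    and "robust_feasible E r U k E0 ED" "Ds \<subseteq> scenarios U k"
  shows "sum c (E0 \<union> \<Union>(ED ` Ds))
    \<le> first_stage_cost c E0 + real (card Ds) * second_stage_cost c U k ED"
proof -
  have edges: "E0 \<union> \<Union>(ED ` Ds') \<subseteq> E" if "Ds' \<subseteq> scenarios U k" for Ds'
    using assms(4) that unfolding robust_feasible_def by blast
  have "finite Ds"
    using assms(3,5) finite_scenarios finite_subset by blast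
  then show ?thesis
    using assms(5)
  proof (induction Ds rule: finite_induct)
    case empty
    then show ?case
      by (simp add: first_stage_cost_def)
  next
    case (insert D Ds)
    have "E0 \<union> \<Union>(ED ` insert D Ds) = (E0 \<union> \<Union>(ED ` Ds)) \<union> ED D"
      by auto
    moreover have "E0 \<union> \<Union>(ED ` Ds) \<subseteq> E" "ED D \<subseteq> E"
      using edges[of Ds] edges[of "{D}"] insert.prems by auto
    ultimately have "sum c (E0 \<union> \<Union>(ED ` insert D Ds)) \<le> sum c (E0 \<union> \<Union>(ED ` Ds)) + sum c (ED D)"
      using sum_Un_le[where f = c and A = "E0 \<union> \<Union>(ED ` Ds)" and B = "ED D"] assms(1,2) finite_subset by (metis IntD2 subsetD)
    also have "\<dots> \<le> first_stage_cost c E0 + real (card Ds + 1) * second_stage_cost c U k ED"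
      using insert second_stage_cost_ge[OF assms(3), of D k c ED] by (simp add: algebra_simps)
    finally show ?case
      using insert.hyps by simp
  qed
qed

lemma spanning_tree_from_scenarios:
  assumes "finite E" "\<forall>e\<in>E. 0 \<le> c e" "finite U"
    and "robust_feasible E r U k E0 ED" "Ds \<subseteq> scenarios U k"
    and "r \<in> S" "S \<subseteq> insert r (\<Union>Ds)"
  shows "\<exists>F. spanning_tree_on S F \<and> tree_cost (spdist E c) F
    \<le> 2 * (first_stage_cost c E0 + real (card Ds) * second_stage_cost c U k ED)"
proof -
  let ?H = "E0 \<union> \<Union>(ED ` Ds)"
  have "?H \<subseteq> E"
    using assms(4,5) unfolding robust_feasible_def by blast
  moreover have "finite ?H"
    using \<open>?H \<subseteq> E\<close> assms(1) by (rule finite_subset)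
  moreover have "S \<subseteq> reach ?H r"
    using robust_feasible_reach[OF assms(4,5)] assms(7) by blast
  ultimately obtain F where "spanning_tree_on S F" "tree_cost (spdist E c) F \<le> 2 * sum c ?H"
    using spanning_tree_cost_le_twice[of ?H E c r S] assms(2,6) by blast
  then show ?thesis
    using sum_scenario_edges_le[OF assms(1-5)] by (intro exI[of _ F]) auto
qed

section \<open>The greedy net\<close>

lemma greedy_net_separated_nth:
  assumes "greedy_net_run E c r U \<delta> ss" "i < j" "j < length ss"
  shows "\<delta> < spdist E c (ss ! j) (ss ! i)"
proof -
  have "\<delta> < spdist_set E c (ss ! j) (set (take j ss))"
    using assms unfolding greedy_net_run_def by auto
  moreover have "ss ! i \<in> set (take j ss)"
    using assms(2,3) by (metis in_set_conv_nth length_take min.absorb4 nth_take)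
  ultimately show ?thesis
    unfolding spdist_set_def by (meson Min_le finite_imageI finite_set imageI less_le_trans)
qed

lemma greedy_net_separated:
  assumes "greedy_net_run E c r U \<delta> ss" "u \<in> set ss" "v \<in> set ss" "u \<noteq> v"
  shows "\<delta> < spdist E c u v"
proof -
  obtain i j where "i < length ss" "u = ss ! i" "j < length ss" "v = ss ! j"
    using assms(2,3) by (metis in_set_conv_nth)
  moreover have "i \<noteq> j"
    using calculation assms(4) by blast
  ultimately show ?thesis
    using greedy_net_separated_nth[OF assms(1)] spdist_sym by (metis linorder_neqE_nat)
qed

lemma greedy_net_subset:
  assumes "greedy_net_run E c r U \<delta> ss"
  shows "r \<in> set ss" "set ss \<subseteq> insert r U"
proof -
  show "r \<in> set ss"
    using assms unfolding greedy_net_run_def by (metis list.set_sel(1))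
  have "ss ! i \<in> insert r U" if "i < length ss" for i
    using assms that unfolding greedy_net_run_def by (cases i) (auto simp: hd_conv_nth)
  then show "set ss \<subseteq> insert r U"
    by (metis in_set_conv_nth subsetI)
qed

lemma greedy_net_size_bound:
  assumes "finite E" "\<forall>e\<in>E. 0 \<le> c e" "finite U" "0 < k"
    and "robust_feasible E r U k E0 ED" "second_stage_cost c U k ED \<le> T" "0 \<le> T"
    and "greedy_net_run E c r U (\<beta> * T / real k) ss"
  shows "real (card (set ss - {r}) div k) * T * (\<beta> - 2) \<le> 2 * first_stage_cost c E0"
proof -
  define g where "g = card (set ss - {r}) div k"
  obtain Y where Y: "Y \<subseteq> set ss - {r}" "card Y = g * k"
    using obtain_subset_with_card_n[of "g * k" "set ss - {r}"] by (auto simp: g_def)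
  have "finite Y"
    using Y(1) by (rule finite_subset) simp
  moreover have "Y \<subseteq> U"
    using Y(1) greedy_net_subset(2)[OF assms(8)] by blast
  ultimately obtain Ds where Ds: "Ds \<subseteq> scenarios U k" "card Ds \<le> g" "Y \<subseteq> \<Union>Ds"
    using scenarios_cover_exact[OF _ _ Y(2)] by meson
  obtain F where F: "spanning_tree_on (insert r Y) F"
    "tree_cost (spdist E c) F
      \<le> 2 * (first_stage_cost c E0 + real (card Ds) * second_stage_cost c U k ED)"
    using spanning_tree_from_scenarios[OF assms(1-3,5) Ds(1), of "insert r Y"] Ds(3) by blast
  have "real (card Ds) * second_stage_cost c U k ED \<le> real (card Ds) * T"
    using assms(6) by (simp add: mult_left_mono)
  also have "\<dots> \<le> real g * T"
    using Ds(2) assms(7) by (simp add: mult_right_mono)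
  finally have "real (card Ds) * second_stage_cost c U k ED \<le> real g * T" .
  moreover have "insert r Y \<subseteq> set ss"
    using Y(1) greedy_net_subset(1)[OF assms(8)] by blast
  then have "real (card (insert r Y) - 1) * (\<beta> * T / real k) \<le> tree_cost (spdist E c) F"
    using greedy_net_separated[OF assms(8)] by (intro tree_cost_ge_separated[OF F(1)]) blast
  moreover have "r \<notin> Y"
    using Y(1) by blast
  then have "card (insert r Y) - 1 = g * k"
    using Y(2) \<open>finite Y\<close> by simp
  then have "real (card (insert r Y) - 1) * (\<beta> * T / real k) = real g * \<beta> * T"
    using assms(4) by simp
  ultimately have "real g * \<beta> * T \<le> 2 * first_stage_cost c E0 + 2 * (real g * T)"
    using F(2) by argo
  then show ?thesis
    unfolding g_def by (simp add: algebra_simps)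
qed

lemma greedy_net_spanning_tree:
  assumes "finite E" "\<forall>e\<in>E. 0 \<le> c e" "finite U" "0 < k" "k \<le> card U"
    and "robust_feasible E r U k E0 ED" "greedy_net_run E c r U \<delta> ss"
  shows "\<exists>F. spanning_tree_on (set ss) F \<and> tree_cost (spdist E c) F
    \<le> 2 * (first_stage_cost c E0
           + (real (card (set ss - {r}) div k) + 1) * second_stage_cost c U k ED)"
proof -
  have "set ss - {r} \<subseteq> U"
    using greedy_net_subset(2)[OF assms(7)] by blast
  then obtain Ds where Ds: "Ds \<subseteq> scenarios U k" "card Ds \<le> card (set ss - {r}) div k + 1"
      "set ss - {r} \<subseteq> \<Union>Ds"
    using scenarios_cover[OF assms(3) _ assms(4,5)] by meson
  have "set ss \<subseteq> insert r (\<Union>Ds)"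
    using Ds(3) by blast
  then obtain F where F: "spanning_tree_on (set ss) F"
      "tree_cost (spdist E c) F
        \<le> 2 * (first_stage_cost c E0 + real (card Ds) * second_stage_cost c U k ED)"
    using spanning_tree_from_scenarios[OF assms(1-3,6) Ds(1) greedy_net_subset(1)[OF assms(7)]]
    by blast
  moreover have "0 \<le> second_stage_cost c U k ED"
    using second_stage_cost_nonneg[OF assms(6,2,3,5)] .
  then have "real (card Ds) * second_stage_cost c U k ED
      \<le> (real (card (set ss - {r}) div k) + 1) * second_stage_cost c U k ED"
    using Ds(2) by (intro mult_right_mono) auto
  ultimately show ?thesis
    by (intro exI[of _ F]) auto
qed

lemma robust_bound_arith:
  fixes \<Phi> T T' g \<beta> :: real
  assumes "g * T * (\<beta> - 2) \<le> 2 * \<Phi>" "T' \<le> T" "0 \<le> g" "2 < \<beta>"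
  shows "2 * (\<Phi> + (g + 1) * T') \<le> (2 * \<beta> / (\<beta> - 2)) * \<Phi> + 2 * T'"
proof -
  have "g * T' * (\<beta> - 2) \<le> g * T * (\<beta> - 2)"
    using assms by (intro mult_right_mono mult_left_mono) auto
  then have "g * T' \<le> 2 * \<Phi> / (\<beta> - 2)"
    using assms(1,4) by (simp add: pos_le_divide_eq)
  then show ?thesis
    using assms(4) by (simp add: field_simps)
qed

theorem mainTheorem17:
  fixes V :: "'a set" and E :: "'a set set" and c :: "'a set \<Rightarrow> real"
    and r :: 'a and U :: "'a set" and k :: nat and lam \<beta> T :: real
    and E0 :: "'a set set" and ED :: "'a set \<Rightarrow> 'a set set"
    and ss :: "'a list" and \<Phi>T :: "('a \<times> 'a) set"
  assumes "graph V E"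
    and "\<forall>e\<in>E. c e \<ge> 0"
    and "r \<in> V" and "U \<subseteq> V"
    and "k \<ge> 1" and "k \<le> card U"
    and "lam \<ge> 1"
    and "T \<ge> 0" and "\<beta> > 2"
    and "robust_optimal E c r U k lam E0 ED"
    and "greedy_net_run E c r U (\<beta> * T / real k) ss"
    and "is_mst (spdist E c) (set ss) \<Phi>T"
    and "T \<ge> second_stage_cost c U k ED"
  shows "tree_cost (spdist E c) \<Phi>T
           \<le> (2 * \<beta> / (\<beta> - 2)) * first_stage_cost c E0 + 2 * second_stage_cost c U k ED"
proof -
  have "finite V" "E \<subseteq> Pow V"
    using assms(1) unfolding graph_def by auto
  then have "finite E" "finite U"
    using finite_subset[OF assms(4)] by (meson finite_Pow_iff finite_subset)+
  have feasible: "robust_feasible E r U k E0 ED"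
    using assms(10) by (simp add: robust_optimal_def)
  have "0 < k"
    using assms(5) by simp
  define g where "g = card (set ss - {r}) div k"
  obtain F where "spanning_tree_on (set ss) F" "tree_cost (spdist E c) F
      \<le> 2 * (first_stage_cost c E0 + (real g + 1) * second_stage_cost c U k ED)"
    using greedy_net_spanning_tree[OF \<open>finite E\<close> assms(2) \<open>finite U\<close> \<open>0 < k\<close> assms(6)
        feasible assms(11)] unfolding g_def by blast
  then have "tree_cost (spdist E c) \<Phi>T
      \<le> 2 * (first_stage_cost c E0 + (real g + 1) * second_stage_cost c U k ED)"
    using assms(12) unfolding is_mst_def by fastforce
  also have "\<dots> \<le> (2 * \<beta> / (\<beta> - 2)) * first_stage_cost c E0 + 2 * second_stage_cost c U k ED"
    using greedy_net_size_bound[OF \<open>finite E\<close> assms(2) \<open>finite U\<close> \<open>0 < k\<close> feasible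
        assms(13,8,11)] assms(9,13)
    unfolding g_def by (intro robust_bound_arith) auto
  finally show ?thesis .
qed

end
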